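(* Assume the scatter-step setting below. Then $$\mathbb{E}\big[\Delta(\theta_1-\eta G_1,\dots,\theta_{h_{ps}}-\eta G_{h_{ps}})\big]\le 6d\eta h_w\sigma'+(1+3d\eta l)\,\Delta(\theta_1,\dots,\theta_{h_{ps}}),$$ where the expectation is over the randomness of the gradient estimates (and anything the received lists depend on).
   Context: Coordinate-wise diameters: $\Delta_i(v_1,\dots,v_h)=\max_{j,k}|v_j[i]-v_k[i]|$, $\Delta=\sum_{i=1}^d\Delta_i$. Minimum–Diameter Averaging: for $f\ge0$, $q\ge2f+1$, $x_1,\dots,x_q\in\mathbb{R}^d$, $\mathrm{MDA}_f(x_1,\dots,x_q)$ is the average of the $x_i$, $i\in I^*$, where $I^*$ is an index set of size $q-f$ minimizing $\max_{i,j\in I}\|x_i-x_j\|_2$ over all $I\subset\{1,\dots,q\}$ with $|I|=q-f$ (ties arbitrary). Scatter-step setting: $L:\mathbb{R}^d\to\mathbb{R}$ differentiable with $l$-Lipschitz gradient; learning rate $\eta>0$; correct server parameters $\theta_1,\dots,\theta_{h_{ps}}\in\mathbb{R}^d$; correct workers' models $x_1,\dots,x_{h_w}\in\mathbb{R}^d$ with $\min_k\theta_k[i]\le x_r[i]\le\max_k\theta_k[i]$ for all coordinates $i$ and all $r$; random gradient estimates $g_1,\dots,g_{h_w}$ with $\mathbb{E}\|g_r-\nabla L(x_r)\|_2\le\sigma'$; integers $f_w\ge1$, $q_w\ge2f_w+1$; each correct server $j$ computes $G_j=\mathrm{MDA}_{f_w}$ of a list of $q_w$ vectors of which at least $q_w-f_w$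 entries belong to $\{g_1,\dots,g_{h_w}\}$ and the others are arbitrary. *)

theory Defs
  imports "HOL-Probability.Probability"
begin

text \<open>The 0 inserted only makes the value 0 for the empty family; for h >= 1 it is the
  maximum max_{j,k} |v_j[i] - v_k[i]| (which is >= 0).\<close>
definition coord_diam :: "nat \<Rightarrow> (nat \<Rightarrow> real^'d) \<Rightarrow> 'd \<Rightarrow> real" where
  "coord_diam h v i = Max (insert 0 {\<bar>v j $ i - v k $ i\<bar> | j k. j < h \<and> k < h})"

definition Delta :: "nat \<Rightarrow> (nat \<Rightarrow> real^'d) \<Rightarrow> real" where
  "Delta h v = (\<Sum>i\<in>UNIV. coord_diam h v i)"

definition idx_diam :: "(real^'d) list \<Rightarrow> nat set \<Rightarrow> real" where
  "idx_diam xs I = Max (insert 0 {norm (xs ! i - xs ! j) | i j. i \<in> I \<and> j \<in> I})"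

text \<open>v is a possible output of MDA_f on the list xs (ties broken arbitrarily).\<close>
definition is_MDA :: "nat \<Rightarrow> (real^'d) list \<Rightarrow> real^'d \<Rightarrow> bool" where
  "is_MDA f xs v \<longleftrightarrow>
     (\<exists>I. I \<subseteq> {..<length xs} \<and> card I = length xs - f \<and>
          (\<forall>J. J \<subseteq> {..<length xs} \<and> card J = length xs - f \<longrightarrow> idx_diam xs I \<le> idx_diam xs J) \<and>
          v = (1 / real (card I)) *\<^sub>R (\<Sum>i\<in>I. xs ! i))"

end

theory Submission
  imports Defs
begin

text \<open>Fix an outcome of the randomness. The correct gradients \<open>g\<^sub>r\<close> lie within
  \<open>e\<^sub>r = \<parallel>g\<^sub>r - \<nabla>L(x\<^sub>r)\<parallel>\<close> of the true gradients, and the true gradients are within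
  \<open>l \<Delta>(\<theta>)\<close> of each other because all \<open>x\<^sub>r\<close> lie in the coordinate box of the \<open>\<theta>\<^sub>k\<close>; so the
  correct gradients have diameter at most \<open>B = 2 \<Sum>\<^sub>r e\<^sub>r + l \<Delta>(\<theta>)\<close>. A minimum-diameter set
  of \<open>q - f\<close> entries has diameter at most that of any \<open>q - f\<close> correct entries, hence at
  most \<open>B\<close>, and since \<open>q > 2f\<close> it contains a correct entry; so every \<open>G\<^sub>j\<close> is within \<open>B\<close>
  of a correct gradient and any two \<open>G\<^sub>j\<close> are within \<open>3B\<close>. This moves each coordinate
  diameter by at most \<open>3\<eta>B\<close>, and taking expectations of \<open>\<Delta>(\<theta>) + 3d\<eta>B\<close> gives the bound.\<close>

lemma coord_diam_set_eq:
  "{\<bar>v j $ i - v k $ i\<bar> | j k. j < h \<and> k < h} = (\<lambda>(j, k). \<bar>v j $ i - v k $ i\<bar>) ` ({..<h} \<times> {..<h})"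
  by auto

lemma coord_diam_ge: "j < h \<Longrightarrow> k < h \<Longrightarrow> \<bar>v j $ i - v k $ i\<bar> \<le> coord_diam h v i"
  unfolding coord_diam_def coord_diam_set_eq by (intro Max_ge) auto

lemma coord_diam_nonneg: "0 \<le> coord_diam h v i"
  unfolding coord_diam_def coord_diam_set_eq by (intro Max_ge) auto

lemma coord_diam_le:
  "0 \<le> c \<Longrightarrow> (\<And>j k. j < h \<Longrightarrow> k < h \<Longrightarrow> \<bar>v j $ i - v k $ i\<bar> \<le> c) \<Longrightarrow> coord_diam h v i \<le> c"
  unfolding coord_diam_def coord_diam_set_eq by (subst Max_le_iff) auto

lemma Delta_nonneg: "0 \<le> Delta h v"
  unfolding Delta_def by (intro sum_nonneg coord_diam_nonneg)

lemma idx_diam_set_eq: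
  "{norm (xs ! i - xs ! j) | i j. i \<in> I \<and> j \<in> I} = (\<lambda>(i, j). norm (xs ! i - xs ! j)) ` (I \<times> I)"
  by auto

lemma idx_diam_ge: "finite I \<Longrightarrow> i \<in> I \<Longrightarrow> j \<in> I \<Longrightarrow> norm (xs ! i - xs ! j) \<le> idx_diam xs I"
  unfolding idx_diam_def idx_diam_set_eq by (intro Max_ge) auto

lemma idx_diam_le:
  "finite I \<Longrightarrow> 0 \<le> c \<Longrightarrow> (\<And>i j. i \<in> I \<Longrightarrow> j \<in> I \<Longrightarrow> norm (xs ! i - xs ! j) \<le> c) \<Longrightarrow> idx_diam xs I \<le> c"
  unfolding idx_diam_def idx_diam_set_eq by (subst Max_le_iff) auto

lemma borel_measurable_vec_nth:
  fixes f :: "'w \<Rightarrow> real^'d"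
  assumes "f \<in> borel_measurable M"
  shows "(\<lambda>\<omega>. f \<omega> $ i) \<in> borel_measurable M"
  using borel_measurable_continuous_on[OF continuous_on_component[OF continuous_on_id] assms] .

lemma borel_measurable_coord_diam:
  fixes V :: "nat \<Rightarrow> 'w \<Rightarrow> real^'d"
  assumes "\<And>j. j < h \<Longrightarrow> V j \<in> borel_measurable M"
  shows "(\<lambda>\<omega>. coord_diam h (\<lambda>j. V j \<omega>) i) \<in> borel_measurable M"
proof -
  let ?P = "{..<h} \<times> {..<h}"
  have "coord_diam h (\<lambda>j. V j \<omega>) i =
      (if h = 0 then 0 else max 0 (Max ((\<lambda>p. \<bar>V (fst p) \<omega> $ i - V (snd p) \<omega> $ i\<bar>) ` ?P)))" for \<omega>
  proof (cases "h = 0")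
    case False
    then have "(\<lambda>p. \<bar>V (fst p) \<omega> $ i - V (snd p) \<omega> $ i\<bar>) ` ?P \<noteq> {}" by auto
    with False show ?thesis
      unfolding coord_diam_def coord_diam_set_eq by (simp add: case_prod_unfold)
  qed (simp add: coord_diam_def)
  moreover have "(\<lambda>\<omega>. Max ((\<lambda>p. \<bar>V (fst p) \<omega> $ i - V (snd p) \<omega> $ i\<bar>) ` ?P)) \<in> borel_measurable M"
    using assms by (intro borel_measurable_Max borel_measurable_abs borel_measurable_diff
        borel_measurable_vec_nth) auto
  ultimately show ?thesis by simp
qed

lemma borel_measurable_Delta:
  "(\<And>j. j < h \<Longrightarrow> V j \<in> borel_measurable M) \<Longrightarrow> (\<lambda>\<omega>. Delta h (\<lambda>j. V j \<omega>)) \<in> borel_measurable M"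
  unfolding Delta_def by (intro borel_measurable_sum borel_measurable_coord_diam)

lemma norm_diff_le_Delta_of_box:
  fixes \<theta> :: "nat \<Rightarrow> real^'d"
  assumes "0 < h"
    and y: "\<And>i. Min ((\<lambda>k. \<theta> k $ i) ` {..<h}) \<le> y $ i \<and> y $ i \<le> Max ((\<lambda>k. \<theta> k $ i) ` {..<h})"
    and z: "\<And>i. Min ((\<lambda>k. \<theta> k $ i) ` {..<h}) \<le> z $ i \<and> z $ i \<le> Max ((\<lambda>k. \<theta> k $ i) ` {..<h})"
  shows "norm (y - z) \<le> Delta h \<theta>"
proof -
  have "\<bar>(y - z) $ i\<bar> \<le> coord_diam h \<theta> i" for i
  proof -
    let ?A = "(\<lambda>k. \<theta> k $ i) ` {..<h}"
    have "finite ?A" "?A \<noteq> {}" using \<open>0 < h\<close> by auto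
    obtain a where "a < h" "\<theta> a $ i = Min ?A"
      using Min_in[OF \<open>finite ?A\<close> \<open>?A \<noteq> {}\<close>] by auto
    moreover obtain b where "b < h" "\<theta> b $ i = Max ?A"
      using Max_in[OF \<open>finite ?A\<close> \<open>?A \<noteq> {}\<close>] by auto
    ultimately show ?thesis using coord_diam_ge[of b h a \<theta> i] y[of i] z[of i] by auto
  qed
  then have "(\<Sum>i\<in>UNIV. \<bar>(y - z) $ i\<bar>) \<le> Delta h \<theta>"
    unfolding Delta_def by (intro sum_mono)
  then show ?thesis using norm_le_l1_cart order_trans by blast
qed

lemma Delta_diff_scaleR_le:
  fixes \<theta> G :: "nat \<Rightarrow> real^'d"
  assumes "0 \<le> \<eta>" "0 \<le> c" and G: "\<And>j k. j < h \<Longrightarrow> k < h \<Longrightarrow> norm (G j - G k) \<le> c"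
  shows "Delta h (\<lambda>j. \<theta> j - \<eta> *\<^sub>R G j) \<le> Delta h \<theta> + real CARD('d) * \<eta> * c"
proof -
  have "coord_diam h (\<lambda>j. \<theta> j - \<eta> *\<^sub>R G j) i \<le> coord_diam h \<theta> i + \<eta> * c" for i
  proof (rule coord_diam_le)
    show "0 \<le> coord_diam h \<theta> i + \<eta> * c"
      using coord_diam_nonneg assms by (intro add_nonneg_nonneg mult_nonneg_nonneg)
    fix j k assume jk: "j < h" "k < h"
    have "\<bar>G j $ i - G k $ i\<bar> \<le> c"
      using component_le_norm_cart[of "G j - G k" i] G[OF jk] by simp
    then have "\<eta> * \<bar>G j $ i - G k $ i\<bar> \<le> \<eta> * c"
      using \<open>0 \<le> \<eta>\<close> by (rule mult_left_mono)
    moreover have "(\<theta> j - \<eta> *\<^sub>R G j) $ i - (\<theta> k - \<eta> *\<^sub>R G k) $ i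
        = (\<theta> j $ i - \<theta> k $ i) - \<eta> * (G j $ i - G k $ i)"
      by (simp add: algebra_simps)
    then have "\<bar>(\<theta> j - \<eta> *\<^sub>R G j) $ i - (\<theta> k - \<eta> *\<^sub>R G k) $ i\<bar>
        \<le> \<bar>\<theta> j $ i - \<theta> k $ i\<bar> + \<eta> * \<bar>G j $ i - G k $ i\<bar>"
      using abs_triangle_ineq4[of "\<theta> j $ i - \<theta> k $ i" "\<eta> * (G j $ i - G k $ i)"] \<open>0 \<le> \<eta>\<close>
      by (simp add: abs_mult)
    ultimately show "\<bar>(\<theta> j - \<eta> *\<^sub>R G j) $ i - (\<theta> k - \<eta> *\<^sub>R G k) $ i\<bar> \<le> coord_diam h \<theta> i + \<eta> * c"
      using coord_diam_ge[OF jk, of \<theta> i] by linarith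
  qed
  then have "Delta h (\<lambda>j. \<theta> j - \<eta> *\<^sub>R G j) \<le> (\<Sum>i\<in>UNIV. coord_diam h \<theta> i + \<eta> * c)"
    unfolding Delta_def by (intro sum_mono)
  then show ?thesis by (simp add: Delta_def sum.distrib)
qed

lemma is_MDA_near_majority:
  fixes xs :: "(real^'d) list"
  assumes "2 * f < length xs"
    and majority: "length xs - f \<le> card {k. k < length xs \<and> xs ! k \<in> S}"
    and S_diam: "\<forall>a\<in>S. \<forall>b\<in>S. norm (a - b) \<le> B"
    and "is_MDA f xs v"
  shows "\<exists>s\<in>S. norm (v - s) \<le> B"
proof -
  define q where "q = length xs"
  define C where "C = {k. k < q \<and> xs ! k \<in> S}"
  obtain I where I: "I \<subseteq> {..<q}" "card I = q - f"
    and I_min: "\<And>J. J \<subseteq> {..<q} \<Longrightarrow> card J = q - f \<Longrightarrow> idx_diam xs I \<le> idx_diam xs J"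
    and v: "v = (1 / real (card I)) *\<^sub>R (\<Sum>i\<in>I. xs ! i)"
    using \<open>is_MDA f xs v\<close> unfolding is_MDA_def q_def by auto
  have "finite I" using I(1) finite_subset by blast
  have C: "C \<subseteq> {..<q}" "finite C" "q - f \<le> card C"
    using majority finite_subset unfolding C_def q_def by auto
  obtain J where J: "J \<subseteq> C" "card J = q - f" "finite J"
    using obtain_subset_with_card_n[OF C(3)] by blast
  have "C \<noteq> {}" using J assms(1) unfolding q_def by auto
  then have "0 \<le> B" using S_diam unfolding C_def by fastforce
  have "idx_diam xs J \<le> B"
    using J S_diam by (intro idx_diam_le[OF J(3) \<open>0 \<le> B\<close>]) (auto simp: C_def)
  then have diam_I: "idx_diam xs I \<le> B"
    using I_min[of J] J C by force
  have "I \<inter> C \<noteq> {}"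
  proof
    assume "I \<inter> C = {}"
    then have "card I \<le> card ({..<q} - C)" using I by (intro card_mono) auto
    also have "\<dots> = q - card C" using C by (simp add: card_Diff_subset)
    finally show False using I(2) C(3) assms(1) unfolding q_def by linarith
  qed
  then obtain k where k: "k \<in> I" "xs ! k \<in> S" unfolding C_def by blast
  have "card I > 0" using I(2) assms(1) unfolding q_def by linarith
  then have "v - xs ! k = (1 / real (card I)) *\<^sub>R (\<Sum>i\<in>I. xs ! i - xs ! k)"
    by (simp add: v sum_subtractf scaleR_diff_right sum_constant_scaleR del: sum_constant)
  then have "norm (v - xs ! k) \<le> (1 / real (card I)) * (\<Sum>i\<in>I. norm (xs ! i - xs ! k))"
    by (simp add: norm_sum divide_right_mono)
  also have "\<dots> \<le> (1 / real (card I)) * (\<Sum>i\<in>I. B)"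
  proof (intro mult_left_mono sum_mono)
    fix i assume "i \<in> I"
    show "norm (xs ! i - xs ! k) \<le> B"
      using idx_diam_ge[OF \<open>finite I\<close> \<open>i \<in> I\<close> k(1), of xs] diam_I by linarith
  qed simp
  also have "\<dots> = B" using \<open>card I > 0\<close> by simp
  finally show ?thesis using k(2) by blast
qed

lemma Lipschitz_const_nonneg:
  fixes F :: "real^'d \<Rightarrow> 'b::real_normed_vector"
  assumes "\<forall>y z. norm (F y - F z) \<le> l * norm (y - z)"
  shows "0 \<le> l"
proof -
  obtain i :: 'd where True by blast
  have "0 < norm (axis i (1::real))" by simp
  moreover have "0 \<le> l * norm (axis i (1::real) - 0)"
    using assms[rule_format, of "axis i 1" 0] by (meson norm_ge_zero order_trans)
  ultimately show ?thesis by (simp add: zero_le_mult_iff)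
qed

lemma Delta_scatter_step_le:
  fixes gradL :: "real^'d \<Rightarrow> real^'d" and \<theta> x g G :: "nat \<Rightarrow> real^'d"
    and lst :: "nat \<Rightarrow> (real^'d) list"
  assumes lip: "\<forall>y z. norm (gradL y - gradL z) \<le> l * norm (y - z)"
    and "0 \<le> \<eta>"
    and x_box: "\<forall>r<h_w. \<forall>i. Min ((\<lambda>k. \<theta> k $ i) ` {..<h_ps}) \<le> x r $ i
                          \<and> x r $ i \<le> Max ((\<lambda>k. \<theta> k $ i) ` {..<h_ps})"
    and "2 * f < q"
    and lists: "\<forall>j<h_ps. length (lst j) = q \<and> q - f \<le> card {k. k < q \<and> lst j ! k \<in> g ` {..<h_w}}"
    and G_MDA: "\<forall>j<h_ps. is_MDA f (lst j) (G j)"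
  shows "Delta h_ps (\<lambda>j. \<theta> j - \<eta> *\<^sub>R G j)
    \<le> (1 + 3 * real CARD('d) * \<eta> * l) * Delta h_ps \<theta>
       + 6 * real CARD('d) * \<eta> * (\<Sum>r<h_w. norm (g r - gradL (x r)))"
proof -
  define e where "e r = norm (g r - gradL (x r))" for r
  define B where "B = 2 * (\<Sum>r<h_w. e r) + l * Delta h_ps \<theta>"
  have "0 \<le> l" using lip by (rule Lipschitz_const_nonneg)
  have e_nonneg: "0 \<le> e r" for r unfolding e_def by simp
  have "0 \<le> B" unfolding B_def
    using \<open>0 \<le> l\<close> e_nonneg by (intro add_nonneg_nonneg mult_nonneg_nonneg sum_nonneg Delta_nonneg) auto
  have g_diam: "\<forall>a\<in>g ` {..<h_w}. \<forall>b\<in>g ` {..<h_w}. norm (a - b) \<le> B" if "0 < h_ps"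
  proof clarsimp
    fix r s assume rs: "r < h_w" "s < h_w"
    have "norm (x r - x s) \<le> Delta h_ps \<theta>"
      using norm_diff_le_Delta_of_box[OF \<open>0 < h_ps\<close>] x_box rs by blast
    then have "l * norm (x r - x s) \<le> l * Delta h_ps \<theta>"
      using \<open>0 \<le> l\<close> by (rule mult_left_mono)
    then have "norm (gradL (x r) - gradL (x s)) \<le> l * Delta h_ps \<theta>"
      using lip[rule_format, of "x r" "x s"] by linarith
    moreover have "norm (gradL (x s) - g s) = e s"
      unfolding e_def by (rule norm_minus_commute)
    ultimately have "norm (g r - g s) \<le> e r + l * Delta h_ps \<theta> + e s"
      unfolding e_def by (intro norm_diff_triangle_le) auto
    moreover have "e r \<le> (\<Sum>r<h_w. e r)" "e s \<le> (\<Sum>r<h_w. e r)"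
      using rs by (auto intro: member_le_sum simp: e_nonneg)
    ultimately show "norm (g r - g s) \<le> B" unfolding B_def by linarith
  qed
  have near: "\<exists>a\<in>g ` {..<h_w}. norm (G j - a) \<le> B" if "j < h_ps" for j
  proof -
    have "0 < h_ps" using that by simp
    have "length (lst j) = q" "q - f \<le> card {k. k < q \<and> lst j ! k \<in> g ` {..<h_w}}"
      using lists that by blast+
    with \<open>2 * f < q\<close> show ?thesis
      using is_MDA_near_majority[of f "lst j" "g ` {..<h_w}" B "G j"] g_diam[OF \<open>0 < h_ps\<close>]
        G_MDA that by simp
  qed
  have G_diam: "norm (G j - G k) \<le> 3 * B" if jk: "j < h_ps" "k < h_ps" for j k
  proof -
    have "0 < h_ps" using jk by simp
    obtain a where a: "a \<in> g ` {..<h_w}" "norm (G j - a) \<le> B" using near[OF jk(1)] by blast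
    obtain b where b: "b \<in> g ` {..<h_w}" "norm (G k - b) \<le> B" using near[OF jk(2)] by blast
    have "norm (a - b) \<le> B" using g_diam[OF \<open>0 < h_ps\<close>] a(1) b(1) by blast
    moreover have "norm (b - G k) \<le> B" by (subst norm_minus_commute) (rule b(2))
    ultimately have "norm (G j - G k) \<le> B + B + B" using a(2) by (intro norm_diff_triangle_le)
    then show ?thesis by simp
  qed
  have "Delta h_ps (\<lambda>j. \<theta> j - \<eta> *\<^sub>R G j) \<le> Delta h_ps \<theta> + real CARD('d) * \<eta> * (3 * B)"
    using \<open>0 \<le> B\<close> G_diam \<open>0 \<le> \<eta>\<close> by (intro Delta_diff_scaleR_le) auto
  then show ?thesis unfolding B_def e_def by (simp add: algebra_simps)
qed

lemma integrable_integral_le_of_sum_bound: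
  fixes D :: "'w \<Rightarrow> real" and e :: "nat \<Rightarrow> 'w \<Rightarrow> real"
  assumes "prob_space M" "D \<in> borel_measurable M" "0 \<le> c"
    and bound: "\<And>\<omega>. \<omega> \<in> space M \<Longrightarrow> 0 \<le> D \<omega> \<and> D \<omega> \<le> a + c * (\<Sum>r<n. e r \<omega>)"
    and e_int: "\<And>r. r < n \<Longrightarrow> integrable M (e r)"
    and e_le: "\<And>r. r < n \<Longrightarrow> (\<integral>\<omega>. e r \<omega> \<partial>M) \<le> \<sigma>"
  shows "integrable M D \<and> (\<integral>\<omega>. D \<omega> \<partial>M) \<le> c * real n * \<sigma> + a"
proof -
  interpret prob_space M by fact
  define F where "F \<omega> = a + c * (\<Sum>r<n. e r \<omega>)" for \<omega>
  have F_int: "integrable M F"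
    unfolding F_def using e_int by (intro Bochner_Integration.integrable_add integrable_mult_right
        Bochner_Integration.integrable_sum) auto
  have "AE \<omega> in M. norm (D \<omega>) \<le> norm (F \<omega>)"
    using bound by (intro AE_I2) (fastforce simp: F_def)
  then have "integrable M D"
    by (rule Bochner_Integration.integrable_bound[OF F_int \<open>D \<in> borel_measurable M\<close>])
  moreover have "(\<integral>\<omega>. D \<omega> \<partial>M) \<le> (\<integral>\<omega>. F \<omega> \<partial>M)"
    using bound by (intro integral_mono[OF \<open>integrable M D\<close> F_int]) (auto simp: F_def)
  moreover have "(\<integral>\<omega>. F \<omega> \<partial>M) = a + c * (\<integral>\<omega>. (\<Sum>r<n. e r \<omega>) \<partial>M)"
    unfolding F_def using e_int
    by (subst Bochner_Integration.integral_add) (auto simp: prob_space)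
  moreover have "(\<integral>\<omega>. (\<Sum>r<n. e r \<omega>) \<partial>M) = (\<Sum>r<n. \<integral>\<omega>. e r \<omega> \<partial>M)"
    using e_int by (intro Bochner_Integration.integral_sum) auto
  moreover have "c * (\<Sum>r<n. \<integral>\<omega>. e r \<omega> \<partial>M) \<le> c * (real n * \<sigma>)"
    using e_le sum_mono[of "{..<n}" "\<lambda>r. \<integral>\<omega>. e r \<omega> \<partial>M" "\<lambda>_. \<sigma>"] \<open>0 \<le> c\<close>
    by (intro mult_left_mono) auto
  ultimately show ?thesis by simp
qed

theorem mainTheorem9:
  fixes L :: "real^'d \<Rightarrow> real" and gradL :: "real^'d \<Rightarrow> real^'d"
    and l \<eta> \<sigma>' :: real
    and h_ps h_w f_w q_w :: nat
    and \<theta> x :: "nat \<Rightarrow> real^'d"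
    and M :: "'w measure"
    and g G :: "nat \<Rightarrow> 'w \<Rightarrow> real^'d"
    and lst :: "nat \<Rightarrow> 'w \<Rightarrow> (real^'d) list"
  assumes grad: "\<forall>y. (L has_derivative (\<lambda>h. gradL y \<bullet> h)) (at y)"
    and lip: "\<forall>y z. norm (gradL y - gradL z) \<le> l * norm (y - z)"
    and eta: "\<eta> > 0"
    and x_box: "\<forall>r<h_w. \<forall>i. Min ((\<lambda>k. \<theta> k $ i) ` {..<h_ps}) \<le> x r $ i
                          \<and> x r $ i \<le> Max ((\<lambda>k. \<theta> k $ i) ` {..<h_ps})"
    and P: "prob_space M"
    and g_meas: "\<forall>r<h_w. g r \<in> borel_measurable M"
    and g_int: "\<forall>r<h_w. integrable M (\<lambda>\<omega>. norm (g r \<omega> - gradL (x r)))"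
    and g_err: "\<forall>r<h_w. (\<integral>\<omega>. norm (g r \<omega> - gradL (x r)) \<partial>M) \<le> \<sigma>'"
    and fw: "f_w \<ge> 1" and qw: "q_w \<ge> 2 * f_w + 1"
    and lists: "\<forall>j<h_ps. \<forall>\<omega>\<in>space M. length (lst j \<omega>) = q_w \<and>
                   card {k. k < q_w \<and> lst j \<omega> ! k \<in> (\<lambda>r. g r \<omega>) ` {..<h_w}} \<ge> q_w - f_w"
    and G_MDA: "\<forall>j<h_ps. \<forall>\<omega>\<in>space M. is_MDA f_w (lst j \<omega>) (G j \<omega>)"
    and G_meas: "\<forall>j<h_ps. G j \<in> borel_measurable M"
  shows "integrable M (\<lambda>\<omega>. Delta h_ps (\<lambda>j. \<theta> j - \<eta> *\<^sub>R G j \<omega>)) \<and>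
         (\<integral>\<omega>. Delta h_ps (\<lambda>j. \<theta> j - \<eta> *\<^sub>R G j \<omega>) \<partial>M)
           \<le> 6 * real CARD('d) * \<eta> * real h_w * \<sigma>' + (1 + 3 * real CARD('d) * \<eta> * l) * Delta h_ps \<theta>"
proof -
  \<comment> \<open>Only the Lipschitz bound on \<open>gradL\<close> enters.\<close>
  let ?d = "real CARD('d)"
  have D_meas: "(\<lambda>\<omega>. Delta h_ps (\<lambda>j. \<theta> j - \<eta> *\<^sub>R G j \<omega>)) \<in> borel_measurable M"
    using G_meas by (intro borel_measurable_Delta borel_measurable_diff borel_measurable_scaleR) auto
  have "2 * f_w < q_w" using qw by simp
  have D_bound: "0 \<le> Delta h_ps (\<lambda>j. \<theta> j - \<eta> *\<^sub>R G j \<omega>) \<and>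
      Delta h_ps (\<lambda>j. \<theta> j - \<eta> *\<^sub>R G j \<omega>)
        \<le> (1 + 3 * ?d * \<eta> * l) * Delta h_ps \<theta> + 6 * ?d * \<eta> * (\<Sum>r<h_w. norm (g r \<omega> - gradL (x r)))"
    if "\<omega> \<in> space M" for \<omega>
  proof
    show "0 \<le> Delta h_ps (\<lambda>j. \<theta> j - \<eta> *\<^sub>R G j \<omega>)" by (rule Delta_nonneg)
    show "Delta h_ps (\<lambda>j. \<theta> j - \<eta> *\<^sub>R G j \<omega>)
        \<le> (1 + 3 * ?d * \<eta> * l) * Delta h_ps \<theta> + 6 * ?d * \<eta> * (\<Sum>r<h_w. norm (g r \<omega> - gradL (x r)))"
    proof (rule Delta_scatter_step_le[OF lip less_imp_le[OF eta] x_box \<open>2 * f_w < q_w\<close>])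
      show "\<forall>j<h_ps. length (lst j \<omega>) = q_w \<and>
          q_w - f_w \<le> card {k. k < q_w \<and> lst j \<omega> ! k \<in> (\<lambda>r. g r \<omega>) ` {..<h_w}}"
        using lists that by blast
      show "\<forall>j<h_ps. is_MDA f_w (lst j \<omega>) (G j \<omega>)" using G_MDA that by blast
    qed
  qed
  have "0 \<le> 6 * ?d * \<eta>" using eta by simp
  from integrable_integral_le_of_sum_bound[OF P D_meas this D_bound g_int[rule_format] g_err[rule_format]]
  show ?thesis .
qed

end
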